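(* Let $G$ be a finite two-player zero-sum game with finite pure strategy sets $S_1,S_2$ and payoffs $v_1=-v_2$, extended bilinearly to mixed strategies, and let $\epsilon\ge 0$. Consider RM-BR DO: populations $\Pi^t_1\subseteq S_1$, $\Pi^t_2\subseteq S_2$ are maintained, starting from nonempty $\Pi^0_i$; at iteration $t$ a restricted profile $\pi^t=(\pi^t_1,\pi^t_2)$ with $\pi^t_i\in\Delta(\Pi^t_i)$ is computed (by regret minimization of player $i$ over $\Pi^t_i$ against best responses of the unrestricted opponent), and then for each $i$ a pure best response of player $i$ to $\pi^t_{-i}$ is added, $\Pi^{t+1}_i=\Pi^t_i\cup\{\beta_i\}$. Assume that in each iteration enough inner-loop updates are run that the exploitability in each restricted game is at most $\epsilon$, i.e. for each $i$ and $t$, $$\min_{\sigma_{-i}\in\Delta(S_{-i})}v_i(\pi^t_i,\sigma_{-i})\ \ge\ \max_{\sigma_i\in\Delta(\Pi^t_i)}\min_{\sigma_{-i}\in\Delta(S_{-i})}v_i(\sigma_i,\sigma_{-i})-\epsilon .$$ Then the exploitability never increases by more than $2\epsilon$ from one iteration to the next: $e(\pi^{t+1})\le e(\pi^t)+2\epsilon$ for every $t$.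
   Context: $\Delta(X)$ denotes the set of mixed strategies supported on the set $X$ of pure strategies. The exploitability of a profile $\pi=(\pi_1,\pi_2)$ is $e(\pi)=\sum_{i\in\{1,2\}}\max_{\pi_i'}v_i(\pi_i',\pi_{-i})$, maximizing over all mixed strategies of player $i$ in the full game. A best response of player $i$ to $\pi_{-i}$ is a strategy maximizing $v_i(\cdot,\pi_{-i})$. *)

theory Defs
  imports Complex_Main
begin

definition mixed :: "'a set \<Rightarrow> ('a \<Rightarrow> real) set" where
  "mixed X = {p. (\<forall>x. 0 \<le> p x) \<and> (\<forall>x. x \<notin> X \<longrightarrow> p x = 0) \<and> sum p X = 1}"

definition pure :: "'a \<Rightarrow> ('a \<Rightarrow> real)" where
  "pure a = (\<lambda>x. if x = a then 1 else 0)"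

definition payoff1 :: "'a set \<Rightarrow> 'b set \<Rightarrow> ('a \<Rightarrow> 'b \<Rightarrow> real)
    \<Rightarrow> ('a \<Rightarrow> real) \<Rightarrow> ('b \<Rightarrow> real) \<Rightarrow> real" where
  "payoff1 S1 S2 u p q = (\<Sum>a\<in>S1. \<Sum>b\<in>S2. p a * q b * u a b)"

definition payoff2 :: "'a set \<Rightarrow> 'b set \<Rightarrow> ('a \<Rightarrow> 'b \<Rightarrow> real)
    \<Rightarrow> ('a \<Rightarrow> real) \<Rightarrow> ('b \<Rightarrow> real) \<Rightarrow> real" where
  "payoff2 S1 S2 u p q = - payoff1 S1 S2 u p q"

definition exploitability :: "'a set \<Rightarrow> 'b set \<Rightarrow> ('a \<Rightarrow> 'b \<Rightarrow> real)
    \<Rightarrow> ('a \<Rightarrow> real) \<Rightarrow> ('b \<Rightarrow> real) \<Rightarrow> real" where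
  "exploitability S1 S2 u p q =
     (SUP s\<in>mixed S1. payoff1 S1 S2 u s q) + (SUP s\<in>mixed S2. payoff2 S1 S2 u p s)"

end

theory Submission
  imports Defs
begin

text \<open>Exploitability is minus the sum of the payoffs the two players guarantee themselves
  against a best-responding opponent. The populations only grow, so \<open>\<pi>\<^sup>t\<^sub>i\<close> is still
  available in the restricted game of iteration \<open>t + 1\<close>; as \<open>\<pi>\<^sup>t\<^sup>+\<^sup>1\<^sub>i\<close> is \<open>\<epsilon>\<close>-optimal there,
  it guarantees at least the guaranteed payoff of \<open>\<pi>\<^sup>t\<^sub>i\<close> minus \<open>\<epsilon>\<close>. Summing over both
  players gives the bound.\<close>

definition guaranteed_payoff :: "'a set \<Rightarrow> 'b set \<Rightarrow> ('a \<Rightarrow> 'b \<Rightarrow> real) \<Rightarrow> ('a \<Rightarrow> real) \<Rightarrow> real"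
  where "guaranteed_payoff S1 S2 u p = (INF q\<in>mixed S2. payoff1 S1 S2 u p q)"

lemma mixed_mono:
  assumes "finite Y" "X \<subseteq> Y" "p \<in> mixed X"
  shows "p \<in> mixed Y"
proof -
  have "sum p Y = sum p X"
    using assms by (intro sum.mono_neutral_right) (auto simp: mixed_def)
  then show ?thesis
    using assms by (auto simp: mixed_def)
qed

lemma mixed_le_1:
  assumes "finite X" "p \<in> mixed X"
  shows "p x \<le> 1"
proof (cases "x \<in> X")
  case True
  then have "p x \<le> sum p X"
    using assms by (intro member_le_sum) (auto simp: mixed_def)
  then show ?thesis
    using assms by (auto simp: mixed_def)
qed (use assms in \<open>auto simp: mixed_def\<close>)

lemma pure_in_mixed: "finite S \<Longrightarrow> a \<in> S \<Longrightarrow> pure a \<in> mixed S"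
  by (auto simp: mixed_def pure_def)

lemma abs_payoff1_le:
  assumes "finite S1" "finite S2" "p \<in> mixed S1" "q \<in> mixed S2"
  shows "\<bar>payoff1 S1 S2 u p q\<bar> \<le> (\<Sum>a\<in>S1. \<Sum>b\<in>S2. \<bar>u a b\<bar>)"
proof -
  have "\<bar>p a * q b * u a b\<bar> \<le> \<bar>u a b\<bar>" for a b
  proof -
    have "0 \<le> p a" "0 \<le> q b"
      using assms by (auto simp: mixed_def)
    moreover have "p a \<le> 1"
      by (rule mixed_le_1[OF assms(1,3)])
    moreover have "q b \<le> 1"
      by (rule mixed_le_1[OF assms(2,4)])
    ultimately have "\<bar>p a * q b\<bar> \<le> 1"
      by (simp add: mult_le_one)
    then have "\<bar>p a * q b\<bar> * \<bar>u a b\<bar> \<le> 1 * \<bar>u a b\<bar>"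
      by (rule mult_right_mono) simp
    then show ?thesis
      by (simp add: abs_mult)
  qed
  then have "(\<Sum>a\<in>S1. \<Sum>b\<in>S2. \<bar>p a * q b * u a b\<bar>) \<le> (\<Sum>a\<in>S1. \<Sum>b\<in>S2. \<bar>u a b\<bar>)"
    by (intro sum_mono)
  moreover have "\<bar>payoff1 S1 S2 u p q\<bar> \<le> (\<Sum>a\<in>S1. \<Sum>b\<in>S2. \<bar>p a * q b * u a b\<bar>)"
    unfolding payoff1_def by (rule order_trans[OF sum_abs sum_mono[OF sum_abs]])
  ultimately show ?thesis
    by linarith
qed

lemma payoff2_swap: "payoff2 S1 S2 u p q = payoff1 S2 S1 (\<lambda>b a. - u a b) q p"
proof -
  have "payoff1 S2 S1 (\<lambda>b a. - u a b) q p = (\<Sum>b\<in>S2. \<Sum>a\<in>S1. - (p a * q b * u a b))"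
    by (simp add: payoff1_def mult_ac)
  also have "\<dots> = payoff2 S1 S2 u p q"
    unfolding payoff2_def payoff1_def by (subst sum.swap) (simp add: sum_negf)
  finally show ?thesis ..
qed

lemma guaranteed_payoff_le_payoff1:
  assumes "finite S1" "finite S2" "p \<in> mixed S1" "q \<in> mixed S2"
  shows "guaranteed_payoff S1 S2 u p \<le> payoff1 S1 S2 u p q"
  unfolding guaranteed_payoff_def
proof (rule cINF_lower[OF _ assms(4)])
  show "bdd_below (payoff1 S1 S2 u p ` mixed S2)"
    using abs_payoff1_le[OF assms(1,2,3), where u = u]
    by (intro bdd_belowI[where m = "- (\<Sum>a\<in>S1. \<Sum>b\<in>S2. \<bar>u a b\<bar>)"]) (force simp: abs_le_iff)
qed

lemma bdd_above_guaranteed_payoff: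
  assumes "finite S1" "finite S2" "S2 \<noteq> {}"
  shows "bdd_above (guaranteed_payoff S1 S2 u ` mixed S1)"
proof -
  obtain b where b: "b \<in> S2"
    using assms(3) by blast
  have "guaranteed_payoff S1 S2 u p \<le> (\<Sum>a\<in>S1. \<Sum>b\<in>S2. \<bar>u a b\<bar>)" if "p \<in> mixed S1" for p
    using guaranteed_payoff_le_payoff1[OF assms(1,2) that pure_in_mixed[OF assms(2) b], where u = u]
      abs_payoff1_le[OF assms(1,2) that pure_in_mixed[OF assms(2) b], where u = u]
    by linarith
  then show ?thesis
    by (intro bdd_aboveI) blast
qed

lemma exploitability_eq_guaranteed_payoffs:
  "exploitability S1 S2 u p q =
     - guaranteed_payoff S1 S2 u p - guaranteed_payoff S2 S1 (\<lambda>b a. - u a b) q"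
proof -
  have "(SUP s\<in>mixed S1. payoff1 S1 S2 u s q) = - guaranteed_payoff S2 S1 (\<lambda>b a. - u a b) q"
    by (simp add: guaranteed_payoff_def Inf_real_def image_comp o_def payoff2_swap[symmetric]
        payoff2_def)
  moreover have "(SUP s\<in>mixed S2. payoff2 S1 S2 u p s) = - guaranteed_payoff S1 S2 u p"
    by (simp add: guaranteed_payoff_def Inf_real_def image_comp o_def payoff2_def)
  ultimately show ?thesis
    by (simp add: exploitability_def)
qed

lemma guaranteed_payoff_growing_population:
  assumes "finite S1" "finite S2" "S2 \<noteq> {}" "P \<subseteq> P'" "P' \<subseteq> S1"
    and "p \<in> mixed P"
    and approx: "guaranteed_payoff S1 S2 u p' \<ge> (SUP \<sigma>\<in>mixed P'. guaranteed_payoff S1 S2 u \<sigma>) - \<epsilon>"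
  shows "guaranteed_payoff S1 S2 u p' \<ge> guaranteed_payoff S1 S2 u p - \<epsilon>"
proof -
  have "finite P'"
    using assms(1,5) finite_subset by blast
  then have "p \<in> mixed P'"
    using assms(4,6) mixed_mono by blast
  moreover have "mixed P' \<subseteq> mixed S1"
    using assms(1,5) mixed_mono by blast
  then have "bdd_above (guaranteed_payoff S1 S2 u ` mixed P')"
    by (rule bdd_above_mono[OF bdd_above_guaranteed_payoff[OF assms(1-3)] image_mono])
  ultimately have "guaranteed_payoff S1 S2 u p \<le> (SUP \<sigma>\<in>mixed P'. guaranteed_payoff S1 S2 u \<sigma>)"
    by (rule cSUP_upper)
  then show ?thesis
    using approx by linarith
qed

theorem proposition4:
  fixes S1 :: "'a set" and S2 :: "'b set" and u :: "'a \<Rightarrow> 'b \<Rightarrow> real"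
    and \<epsilon> :: real
    and P1 :: "nat \<Rightarrow> 'a set" and P2 :: "nat \<Rightarrow> 'b set"
    and \<pi>1 :: "nat \<Rightarrow> 'a \<Rightarrow> real" and \<pi>2 :: "nat \<Rightarrow> 'b \<Rightarrow> real"
    and \<beta>1 :: "nat \<Rightarrow> 'a" and \<beta>2 :: "nat \<Rightarrow> 'b"
  assumes fin1: "finite S1" and fin2: "finite S2"
    and ne1: "S1 \<noteq> {}" and ne2: "S2 \<noteq> {}"
    and eps: "\<epsilon> \<ge> 0"
    and init1: "P1 0 \<noteq> {}" and init2: "P2 0 \<noteq> {}"
    and sub1: "\<And>t. P1 t \<subseteq> S1" and sub2: "\<And>t. P2 t \<subseteq> S2"
    and restr1: "\<And>t. \<pi>1 t \<in> mixed (P1 t)"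
    and restr2: "\<And>t. \<pi>2 t \<in> mixed (P2 t)"
    and br1: "\<And>t. \<beta>1 t \<in> S1 \<and>
              (\<forall>\<sigma>\<in>mixed S1. payoff1 S1 S2 u \<sigma> (\<pi>2 t) \<le> payoff1 S1 S2 u (pure (\<beta>1 t)) (\<pi>2 t))"
    and br2: "\<And>t. \<beta>2 t \<in> S2 \<and>
              (\<forall>\<sigma>\<in>mixed S2. payoff2 S1 S2 u (\<pi>1 t) \<sigma> \<le> payoff2 S1 S2 u (\<pi>1 t) (pure (\<beta>2 t)))"
    and upd1: "\<And>t. P1 (Suc t) = P1 t \<union> {\<beta>1 t}"
    and upd2: "\<And>t. P2 (Suc t) = P2 t \<union> {\<beta>2 t}"
    and approx1: "\<And>t. (INF \<sigma>'\<in>mixed S2. payoff1 S1 S2 u (\<pi>1 t) \<sigma>') \<ge>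
                 (SUP \<sigma>\<in>mixed (P1 t). INF \<sigma>'\<in>mixed S2. payoff1 S1 S2 u \<sigma> \<sigma>') - \<epsilon>"
    and approx2: "\<And>t. (INF \<sigma>'\<in>mixed S1. payoff2 S1 S2 u \<sigma>' (\<pi>2 t)) \<ge>
                 (SUP \<sigma>\<in>mixed (P2 t). INF \<sigma>'\<in>mixed S1. payoff2 S1 S2 u \<sigma>' \<sigma>) - \<epsilon>"
  shows "\<forall>t. exploitability S1 S2 u (\<pi>1 (Suc t)) (\<pi>2 (Suc t))
              \<le> exploitability S1 S2 u (\<pi>1 t) (\<pi>2 t) + 2 * \<epsilon>"
proof
  fix t
  let ?u' = "\<lambda>b a. - u a b"
  have mono1: "P1 t \<subseteq> P1 (Suc t)" and mono2: "P2 t \<subseteq> P2 (Suc t)"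
    using upd1 upd2 by blast+
  have "guaranteed_payoff S1 S2 u (\<pi>1 (Suc t))
      \<ge> (SUP \<sigma>\<in>mixed (P1 (Suc t)). guaranteed_payoff S1 S2 u \<sigma>) - \<epsilon>"
    using approx1[of "Suc t"] by (simp add: guaranteed_payoff_def)
  with guaranteed_payoff_growing_population[OF fin1 fin2 ne2 mono1 sub1 restr1]
  have player1: "guaranteed_payoff S1 S2 u (\<pi>1 (Suc t)) \<ge> guaranteed_payoff S1 S2 u (\<pi>1 t) - \<epsilon>" .
  have "guaranteed_payoff S2 S1 ?u' (\<pi>2 (Suc t))
      \<ge> (SUP \<sigma>\<in>mixed (P2 (Suc t)). guaranteed_payoff S2 S1 ?u' \<sigma>) - \<epsilon>"
    using approx2[of "Suc t"] by (simp add: guaranteed_payoff_def payoff2_swap)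
  with guaranteed_payoff_growing_population[OF fin2 fin1 ne1 mono2 sub2 restr2]
  have player2: "guaranteed_payoff S2 S1 ?u' (\<pi>2 (Suc t)) \<ge> guaranteed_payoff S2 S1 ?u' (\<pi>2 t) - \<epsilon>" .
  show "exploitability S1 S2 u (\<pi>1 (Suc t)) (\<pi>2 (Suc t))
      \<le> exploitability S1 S2 u (\<pi>1 t) (\<pi>2 t) + 2 * \<epsilon>"
    unfolding exploitability_eq_guaranteed_payoffs using player1 player2 by linarith
qed

end
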